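(* Let $e(\tau,s)$ be a complete equation of state of Mie–Grüneisen form, $p(\tau,s)=\pi(\tau,e(\tau,s))$ with $\pi(\tau,e)=p_s(\tau)+\frac{\Gamma(\tau)}{\tau}(e-e_s(\tau))$, where $e_s$ is a reference isentrope, $p_s=-e_s'$, and $\pi,\Gamma$ are sufficiently differentiable. Let $K_s(\tau)=-\tau p_s'(\tau)$ and let $\mathsf G(\tau,e)=G(\tau,s(\tau,e))$ be the fundamental derivative. Assume (i) $\Gamma$ is a positive, decreasing and convex function of $\tau$; (ii) $K_s$ is a decreasing positive function; (iii) $e\ge e_s(\tau)$. Then $$\mathsf G(\tau,e)\ge\frac12\left[1+\min\Big(\inf_{\tau>0}\frac{-\tau K_s'(\tau)}{K_s(\tau)},\ \inf_\tau\Gamma(\tau)+1\Big)\right].$$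
   Context: For a complete equation of state $e(\tau,s)$ (specific internal energy as a function of specific volume $\tau$ and specific entropy $s$), the pressure is $p=-\partial_\tau e$ and the fundamental derivative is $G(\tau,s)=-\tfrac12\tau\,\partial^2_\tau p(\tau,s)/\partial_\tau p(\tau,s)$; $s(\tau,e)$ denotes the inverse of $s\mapsto e(\tau,s)$. *)

theory Defs
  imports "HOL-Analysis.Analysis"
begin

definition pres :: "(real \<Rightarrow> real \<Rightarrow> real) \<Rightarrow> real \<Rightarrow> real \<Rightarrow> real" where
  "pres e \<tau> s = - deriv (\<lambda>t. e t s) \<tau>"

definition fund_deriv :: "(real \<Rightarrow> real \<Rightarrow> real) \<Rightarrow> real \<Rightarrow> real \<Rightarrow> real" where
  "fund_deriv e \<tau> s =
     - (1/2) * \<tau> * deriv (deriv (\<lambda>u. pres e u s)) \<tau> / deriv (\<lambda>u. pres e u s) \<tau>"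

end

theory Submission
  imports Defs
begin

(*
  Along an isentrope the gap g = e - e_s between the energy and the reference isentrope solves
  g' = -(Gamma/tau) g, so differentiating p = p_s + (Gamma/tau) g twice gives
    tau^2 (-p') = K_s tau + (Gamma^2 + Gamma - tau Gamma') g,
    tau^3 p''   = K_s tau - K_s' tau^2
                  + (tau^2 Gamma'' - 2 tau Gamma' + 2 Gamma - 3 tau Gamma Gamma' + 3 Gamma^2 + Gamma^3) g.
  Hence 2G is a ratio of two sums; the K_s-terms have ratio 1 - tau K_s'/K_s and, since
  Gamma' <= 0 <= Gamma'', the g-terms have ratio at least Gamma + 2.
*)

lemma antimono_on_imp_deriv_nonpos:
  fixes f :: "real \<Rightarrow> real"
  assumes "antimono_on A f" and "(f has_real_derivative D) (at x)" and "x \<in> interior A"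
  shows "D \<le> 0"
proof -
  have "mono_on A (\<lambda>y. - f y)"
    using assms(1) by (auto simp: monotone_on_def)
  moreover have "((\<lambda>y. - f y) has_real_derivative - D) (at x)"
    using assms(2) by (rule DERIV_minus)
  ultimately show ?thesis
    using mono_on_imp_deriv_nonneg assms(3) by fastforce
qed

lemma convex_on_imp_second_deriv_nonneg:
  fixes f f' :: "real \<Rightarrow> real"
  assumes convex: "convex_on A f" and "connected A"
    and f': "\<And>y. y \<in> interior A \<Longrightarrow> (f has_real_derivative f' y) (at y)"
    and f'': "(f' has_real_derivative D) (at x)" and x: "x \<in> interior A"
  shows "D \<ge> 0"
proof -
  have tangent: "f' y * (z - y) \<le> f z - f y" if "y \<in> interior A" "z \<in> interior A" for y z
    using convex_on_imp_above_tangent[OF convex \<open>connected A\<close>] f'[THEN has_field_derivative_at_within]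
      that interior_subset by blast
  have "mono_on (interior A) f'"
  proof (rule mono_onI)
    fix y z assume yz: "y \<in> interior A" "z \<in> interior A" "y \<le> z"
    have "f' y * (z - y) \<le> f' z * (z - y)"
      using tangent[OF yz(1,2)] tangent[OF yz(2,1)] by argo
    then show "f' y \<le> f' z"
      using yz(3) by (cases "y = z") (auto simp: mult_le_cancel_right)
  qed
  then show ?thesis
    using mono_on_imp_deriv_nonneg f'' x by (metis interior_interior)
qed

lemma mie_grueneisen_fund_deriv_lower_bound:
  fixes t q K K' \<Gamma> \<Gamma>' \<Gamma>'' m P' P'' :: real
  assumes t: "t > 0" and \<Gamma>: "\<Gamma> > 0" and \<Gamma>': "\<Gamma>' \<le> 0" and \<Gamma>'': "\<Gamma>'' \<ge> 0" and q: "q \<ge> 0"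
    and K: "K > 0" and mK: "m \<le> - t * K' / K" and m\<Gamma>: "m \<le> \<Gamma> + 1"
    and P': "P' = - (K * t + (\<Gamma>\<^sup>2 + \<Gamma> - t * \<Gamma>') * q) / t\<^sup>2"
    and P'': "P'' = (K * t - K' * t\<^sup>2
            + (t\<^sup>2 * \<Gamma>'' - 2 * t * \<Gamma>' + 2 * \<Gamma> - 3 * t * \<Gamma> * \<Gamma>' + 3 * \<Gamma>\<^sup>2 + \<Gamma> ^ 3) * q) / t ^ 3"
  shows "1/2 * (1 + m) \<le> - (1/2) * t * P'' / P'"
proof -
  define A where "A = \<Gamma>\<^sup>2 + \<Gamma> - t * \<Gamma>'"
  define B where "B = t\<^sup>2 * \<Gamma>'' - 2 * t * \<Gamma>' + 2 * \<Gamma> - 3 * t * \<Gamma> * \<Gamma>' + 3 * \<Gamma>\<^sup>2 + \<Gamma> ^ 3"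
  have A_pos: "A > 0"
    unfolding A_def using \<Gamma> mult_nonneg_nonpos[OF less_imp_le[OF t] \<Gamma>'] zero_le_power2[of \<Gamma>]
    by linarith
  have K_part: "(1 + m) * (K * t) \<le> K * t - K' * t\<^sup>2"
    using mult_right_mono[OF mK[unfolded pos_le_divide_eq[OF K]] less_imp_le[OF t]]
    by (simp add: algebra_simps power2_eq_square)
  have "(1 + m) * A \<le> (\<Gamma> + 2) * A"
    using A_pos m\<Gamma> by (intro mult_right_mono) auto
  also have "\<dots> \<le> B"
  proof -
    have "\<Gamma> * (t * \<Gamma>') \<le> 0"
      using t \<Gamma> \<Gamma>' by (simp add: mult_nonneg_nonpos)
    moreover have "0 \<le> t\<^sup>2 * \<Gamma>''"
      using \<Gamma>'' by simp
    ultimately show ?thesis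
      unfolding A_def B_def by (simp add: algebra_simps power2_eq_square power3_eq_cube)
  qed
  finally have \<Gamma>_part: "(1 + m) * (A * q) \<le> B * q"
    using q by (metis mult.assoc mult_right_mono)
  have D_pos: "0 < K * t + A * q"
    using K t A_pos q by (simp add: add_pos_nonneg)
  have "- (1/2) * t * P'' / P' = (K * t - K' * t\<^sup>2 + B * q) / (2 * (K * t + A * q))"
    unfolding P' P'' A_def[symmetric] B_def[symmetric]
    using t D_pos by (simp add: divide_simps power2_eq_square power3_eq_cube) algebra
  with K_part \<Gamma>_part D_pos show ?thesis
    by (simp add: pos_le_divide_eq algebra_simps)
qed

lemma reference_isentrope_derivatives:
  fixes e\<^sub>s p K :: "real \<Rightarrow> real" and S :: "real set"
  assumes S: "open S" and t: "t \<in> S" "t \<noteq> 0"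
    and smooth: "\<And>u. u \<in> S \<Longrightarrow> e\<^sub>s differentiable at u \<and> deriv e\<^sub>s differentiable at u
                    \<and> deriv (deriv e\<^sub>s) differentiable at u"
    and p_def: "p = (\<lambda>u. - deriv e\<^sub>s u)" and K_def: "K = (\<lambda>u. - u * deriv (\<lambda>v. - deriv e\<^sub>s v) u)"
  shows "(e\<^sub>s has_real_derivative - p t) (at t)"
    and "(p has_real_derivative - K t / t) (at t)"
    and "(K has_real_derivative deriv K t) (at t)"
proof -
  have p': "(p has_real_derivative - deriv (deriv e\<^sub>s) u) (at u)" if "u \<in> S" for u
    unfolding p_def using smooth[OF that] by (auto intro!: DERIV_minus simp: DERIV_deriv_iff_real_differentiable)
  have deriv_p: "deriv p u = - deriv (deriv e\<^sub>s) u" if "u \<in> S" for u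
    using p'[OF that] by (rule DERIV_imp_deriv)
  show "(e\<^sub>s has_real_derivative - p t) (at t)"
    using smooth[OF t(1)] by (simp add: p_def DERIV_deriv_iff_real_differentiable)
  show "(p has_real_derivative - K t / t) (at t)"
    using p'[OF t(1)] t(2) by (simp add: K_def deriv_p[unfolded p_def] t(1))
  have "((\<lambda>u. u * deriv (deriv e\<^sub>s) u) has_real_derivative
          deriv (deriv e\<^sub>s) t + t * deriv (deriv (deriv e\<^sub>s)) t) (at t)"
    using smooth[OF t(1)] by (auto intro!: derivative_eq_intros simp: DERIV_deriv_iff_real_differentiable)
  then have "(K has_real_derivative deriv (deriv e\<^sub>s) t + t * deriv (deriv (deriv e\<^sub>s)) t) (at t)"
    by (rule has_field_derivative_transform_within_open[OF _ S t(1)])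
      (simp add: K_def deriv_p[unfolded p_def])
  then show "(K has_real_derivative deriv K t) (at t)"
    by (simp add: DERIV_imp_deriv)
qed

lemma mie_grueneisen_pressure_derivatives:
  fixes P p K K' e e\<^sub>s \<Gamma> \<Gamma>' \<Gamma>'' :: "real \<Rightarrow> real" and S :: "real set"
  assumes S: "open S" "0 \<notin> S"
    and MG: "\<And>u. u \<in> S \<Longrightarrow> P u = p u + \<Gamma> u / u * (e u - e\<^sub>s u)"
    and e: "\<And>u. u \<in> S \<Longrightarrow> (e has_real_derivative - P u) (at u)"
    and e\<^sub>s: "\<And>u. u \<in> S \<Longrightarrow> (e\<^sub>s has_real_derivative - p u) (at u)"
    and p: "\<And>u. u \<in> S \<Longrightarrow> (p has_real_derivative - K u / u) (at u)"
    and K: "\<And>u. u \<in> S \<Longrightarrow> (K has_real_derivative K' u) (at u)"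
    and \<Gamma>: "\<And>u. u \<in> S \<Longrightarrow> (\<Gamma> has_real_derivative \<Gamma>' u) (at u)"
    and \<Gamma>': "\<And>u. u \<in> S \<Longrightarrow> (\<Gamma>' has_real_derivative \<Gamma>'' u) (at u)"
    and t: "t \<in> S"
  shows "deriv P t = - (K t * t + ((\<Gamma> t)\<^sup>2 + \<Gamma> t - t * \<Gamma>' t) * (e t - e\<^sub>s t)) / t\<^sup>2"
      (is "_ = ?P'")
    and "deriv (deriv P) t = (K t * t - K' t * t\<^sup>2
           + (t\<^sup>2 * \<Gamma>'' t - 2 * t * \<Gamma>' t + 2 * \<Gamma> t - 3 * t * \<Gamma> t * \<Gamma>' t
              + 3 * (\<Gamma> t)\<^sup>2 + (\<Gamma> t) ^ 3) * (e t - e\<^sub>s t)) / t ^ 3"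
      (is "_ = ?P''")
proof -
  define g where "g u = e u - e\<^sub>s u" for u
  define P' where "P' u = - (K u * u + ((\<Gamma> u)\<^sup>2 + \<Gamma> u - u * \<Gamma>' u) * g u) / u\<^sup>2" for u
  have nonzero: "u \<noteq> 0" if "u \<in> S" for u
    using S(2) that by blast
  have g: "(g has_real_derivative - (\<Gamma> u / u) * g u) (at u)" if u: "u \<in> S" for u
    unfolding g_def using DERIV_diff[OF e[OF u] e\<^sub>s[OF u]] MG[OF u] by simp
  have P: "(P has_real_derivative P' u) (at u)" if u: "u \<in> S" for u
  proof (rule has_field_derivative_transform_within_open)
    show "((\<lambda>v. p v + \<Gamma> v / v * g v) has_real_derivative P' u) (at u)"
      using p[OF u] \<Gamma>[OF u] g[OF u] nonzero[OF u]
      by (auto intro!: derivative_eq_intros simp: P'_def field_simps power2_eq_square)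
  qed (use S u MG g_def in auto)
  define P'' where "P'' = (K t * t - K' t * t\<^sup>2 + (t\<^sup>2 * \<Gamma>'' t - 2 * t * \<Gamma>' t + 2 * \<Gamma> t
      - 3 * t * \<Gamma> t * \<Gamma>' t + 3 * (\<Gamma> t)\<^sup>2 + (\<Gamma> t) ^ 3) * g t) / t ^ 3"
  have P': "(P' has_real_derivative P'') (at t)"
    unfolding P'_def P''_def using K[OF t] \<Gamma>[OF t] \<Gamma>'[OF t] g[OF t] nonzero[OF t]
    by (auto intro!: derivative_eq_intros simp: field_simps power2_eq_square power3_eq_cube)
  show "deriv P t = ?P'"
    using DERIV_imp_deriv[OF P[OF t]] by (simp add: P'_def g_def)
  have "(deriv P has_real_derivative P'') (at t)"
    by (rule has_field_derivative_transform_within_open[OF P' S(1) t]) (metis P DERIV_imp_deriv)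
  then show "deriv (deriv P) t = ?P''"
    using DERIV_imp_deriv by (simp add: P''_def g_def)
qed

lemma pres_derivatives_mie_grueneisen:
  fixes e :: "real \<Rightarrow> real \<Rightarrow> real" and e\<^sub>s \<Gamma> p K :: "real \<Rightarrow> real" and \<tau> s :: real
  assumes e_smooth: "\<And>t. t > 0 \<Longrightarrow> (\<lambda>u. e u s) differentiable at t"
    and es_smooth: "\<forall>t>0. e\<^sub>s differentiable at t \<and> deriv e\<^sub>s differentiable at t
              \<and> deriv (deriv e\<^sub>s) differentiable at t"
    and \<Gamma>_smooth: "\<forall>t>0. \<Gamma> differentiable at t \<and> deriv \<Gamma> differentiable at t"
    and p_def: "p = (\<lambda>t. - deriv e\<^sub>s t)" and K_def: "K = (\<lambda>t. - t * deriv (\<lambda>u. - deriv e\<^sub>s u) t)"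
    and MG: "\<And>t. t > 0 \<Longrightarrow> pres e t s = p t + \<Gamma> t / t * (e t s - e\<^sub>s t)"
    and \<tau>: "\<tau> > 0"
  shows "deriv (\<lambda>u. pres e u s) \<tau>
           = - (K \<tau> * \<tau> + ((\<Gamma> \<tau>)\<^sup>2 + \<Gamma> \<tau> - \<tau> * deriv \<Gamma> \<tau>) * (e \<tau> s - e\<^sub>s \<tau>)) / \<tau>\<^sup>2"
      (is "_ = ?P'")
    and "deriv (deriv (\<lambda>u. pres e u s)) \<tau>
           = (K \<tau> * \<tau> - deriv K \<tau> * \<tau>\<^sup>2
              + (\<tau>\<^sup>2 * deriv (deriv \<Gamma>) \<tau> - 2 * \<tau> * deriv \<Gamma> \<tau> + 2 * \<Gamma> \<tau>
                 - 3 * \<tau> * \<Gamma> \<tau> * deriv \<Gamma> \<tau> + 3 * (\<Gamma> \<tau>)\<^sup>2 + (\<Gamma> \<tau>) ^ 3)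
                * (e \<tau> s - e\<^sub>s \<tau>)) / \<tau> ^ 3"
      (is "_ = ?P''")
proof -
  have e_deriv: "((\<lambda>u. e u s) has_real_derivative - pres e u s) (at u)" if "u > 0" for u
    using e_smooth[OF that] by (simp add: pres_def DERIV_deriv_iff_real_differentiable)
  note reference = reference_isentrope_derivatives[OF open_greaterThan _ _ _ p_def K_def]
  have \<Gamma>_derivs: "(\<Gamma> has_real_derivative deriv \<Gamma> u) (at u)"
      "(deriv \<Gamma> has_real_derivative deriv (deriv \<Gamma>) u) (at u)" if "u > 0" for u
    using \<Gamma>_smooth that by (simp_all add: DERIV_deriv_iff_real_differentiable)
  have K_deriv: "(K has_real_derivative deriv K u) (at u)" if "u > 0" for u
    using reference(3) es_smooth that by simp
  note pressure_derivs = mie_grueneisen_pressure_derivatives[where S = "{0<..}" and e = "\<lambda>u. e u s",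
      OF open_greaterThan _ _ e_deriv reference(1,2) K_deriv \<Gamma>_derivs]
  show "deriv (\<lambda>u. pres e u s) \<tau> = ?P'" and "deriv (deriv (\<lambda>u. pres e u s)) \<tau> = ?P''"
    using pressure_derivs MG \<tau> es_smooth by simp_all
qed

theorem propositionA2:
  fixes e :: "real \<Rightarrow> real \<Rightarrow> real" and e\<^sub>s \<Gamma> :: "real \<Rightarrow> real" and \<tau> s :: real
  defines "p\<^sub>s \<equiv> (\<lambda>t. - deriv e\<^sub>s t)"
      and "K\<^sub>s \<equiv> (\<lambda>t. - t * deriv (\<lambda>u. - deriv e\<^sub>s u) t)"
  assumes e_smooth: "\<forall>s'. \<forall>t>0. (\<lambda>u. e u s') differentiable at t
              \<and> deriv (\<lambda>u. e u s') differentiable at t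
              \<and> deriv (deriv (\<lambda>u. e u s')) differentiable at t"
      and es_smooth: "\<forall>t>0. e\<^sub>s differentiable at t \<and> deriv e\<^sub>s differentiable at t
              \<and> deriv (deriv e\<^sub>s) differentiable at t"
      and \<Gamma>_smooth: "\<forall>t>0. \<Gamma> differentiable at t \<and> deriv \<Gamma> differentiable at t"
      and MG: "\<forall>s'. \<forall>t>0. pres e t s' = p\<^sub>s t + \<Gamma> t / t * (e t s' - e\<^sub>s t)"
      and \<Gamma>_pos: "\<forall>t>0. \<Gamma> t > 0"
      and \<Gamma>_decr: "antimono_on {0<..} \<Gamma>"
      and \<Gamma>_convex: "convex_on {0<..} \<Gamma>"
      and K_pos: "\<forall>t>0. K\<^sub>s t > 0"
      and K_decr: "antimono_on {0<..} K\<^sub>s"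
      and \<tau>_pos: "\<tau> > 0"
      and above: "e \<tau> s \<ge> e\<^sub>s \<tau>"
  shows "fund_deriv e \<tau> s \<ge> 1/2 * (1 + min (INF t\<in>{0<..}. - t * deriv K\<^sub>s t / K\<^sub>s t)
                                          ((INF t\<in>{0<..}. \<Gamma> t) + 1))"
proof -
  note p_def = p\<^sub>s_def[THEN meta_eq_to_obj_eq] and K_def = K\<^sub>s_def[THEN meta_eq_to_obj_eq]
  have e_diff: "(\<lambda>u. e u s) differentiable at t" if "t > 0" for t
    using e_smooth that by blast
  note derivs = pres_derivatives_mie_grueneisen[OF e_diff es_smooth \<Gamma>_smooth p_def K_def
      MG[rule_format] \<tau>_pos]
  have K_deriv: "(K\<^sub>s has_real_derivative deriv K\<^sub>s t) (at t)" if "t > 0" for t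
    using reference_isentrope_derivatives(3)[OF open_greaterThan _ _ _ p_def K_def] es_smooth that
    by simp
  have interior: "interior {0<..} = {0::real<..}"
    by (simp add: interior_open)
  have K'_nonpos: "deriv K\<^sub>s t \<le> 0" if "t > 0" for t
    using antimono_on_imp_deriv_nonpos[OF K_decr K_deriv] that interior by simp
  have "(INF t\<in>{0<..}. - t * deriv K\<^sub>s t / K\<^sub>s t) \<le> - \<tau> * deriv K\<^sub>s \<tau> / K\<^sub>s \<tau>"
    by (rule cINF_lower[OF bdd_belowI2[where m = 0]])
      (use \<tau>_pos K_pos K'_nonpos in \<open>auto intro!: divide_nonpos_pos mult_nonneg_nonpos\<close>)
  moreover have "(INF t\<in>{0<..}. \<Gamma> t) \<le> \<Gamma> \<tau>"
    by (rule cINF_lower[OF bdd_belowI2[where m = 0]]) (use \<tau>_pos \<Gamma>_pos in \<open>auto simp: less_imp_le\<close>)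
  moreover have "deriv \<Gamma> \<tau> \<le> 0"
    using antimono_on_imp_deriv_nonpos[OF \<Gamma>_decr, where D = "deriv \<Gamma> \<tau>" and x = \<tau>]
      \<Gamma>_smooth \<tau>_pos interior
    by (simp add: DERIV_deriv_iff_real_differentiable)
  moreover have "deriv (deriv \<Gamma>) \<tau> \<ge> 0"
    using convex_on_imp_second_deriv_nonneg[OF \<Gamma>_convex,
        where f' = "deriv \<Gamma>" and D = "deriv (deriv \<Gamma>) \<tau>" and x = \<tau>] \<Gamma>_smooth \<tau>_pos interior
    by (simp add: DERIV_deriv_iff_real_differentiable)
  ultimately show ?thesis
    unfolding fund_deriv_def
    by (intro mie_grueneisen_fund_deriv_lower_bound[OF _ _ _ _ _ _ _ _ derivs])
      (use \<tau>_pos \<Gamma>_pos K_pos above in \<open>auto intro: min.coboundedI1 min.coboundedI2\<close>)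
qed

end
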